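(* Under the standing setup, let $\hat V_\tau$ be the extended heuristic on all of $\mathbb R^D$. Then: (i) for every $t\in\{0,\dots,T-2\}$, $l\in\{0,\dots,k\}$, $s\in\mathbb R^D$ and $a\in\mathcal A'_{l,t}$, writing $(s_a,l_a)=F^+_{\tau,t}((s,l),a)$, $$\hat V_\tau(s,l,t)\ge R(s,a)+\hat V_\tau(s_a,l_a,t+1);$$ (ii) for every $l\in\{0,\dots,k\}$, $s\in\mathbb R^D$ and $a\in\mathcal A'_{l,T-1}$, $\hat V_\tau(s,l,T-1)\ge R(s,a)+\hat V_\tau(\cdot,k,T)=R(s,a)$. In other words, $\hat V_\tau$ is a consistent heuristic for the search graph whose nodes are $(s,l,t)$ and whose edges are labeled by $a\in\mathcal A'_{l,t}$, carry reward $R(s,a)$, and lead to $(s_a,l_a,t+1)$ (or to a goal node at time $T$ when $t=T-1$).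
   Context: Standing setup: state space $\mathcal S=\mathbb R^D$, finite action set $\mathcal A$, horizon $T\ge2$, noise space $\mathcal U$. A transition mechanism $g_S:\mathcal S\times\mathcal A\times\mathcal U\to\mathcal S$ is bijective in its last argument, with inverse $g_S^{-1}:\mathcal S\times\mathcal A\times\mathcal S\to\mathcal U$ satisfying $u=g_S^{-1}(s,a,s')$ whenever $s'=g_S(s,a,u)$. Reward $R:\mathcal S\times\mathcal A\to\mathbb R$. Lipschitz assumption: for each $a\in\mathcal A,u\in\mathcal U$ there is $K_{a,u}\ge0$ with $\|g_S(s,a,u)-g_S(s',a,u)\|\le K_{a,u}\|s-s'\|$, and for each $a$ there is $C_a\ge0$ with $|R(s,a)-R(s',a)|\le C_a\|s-s'\|$, for all $s,s'\in\mathcal S$ (Euclidean norm). An observed episode $\tau$ consists of states $s_0,\dots,s_{T-1}$ and actions $a_0,\dots,a_{T-1}$; put $u_t=g_S^{-1}(s_t,a_t,s_{t+1})$ for $t=0,\dots,T-2$. Fix a budget $k\in\{0,\dots,T\}$. For $t\le T-2$ define $F^+_{\tau,t}((s,l),a)=\big(g_S(s,a,u_t),\,l+\mathbf 1[a\ne a_t]\big)$. Constants: $K_{u_t}=\max_{a}K_{a,u_t}$, $C=\max_a C_a$, $L_{T-1}=C$, $L_t=C+L_{t+1}K_{u_t}$ for $t\le T-2$. For $l\in\{0,\dots,k\}$ and time $t$, let $\mathcal A'_{l,t}=\{a_t\}$ if $l=k$ and $\mathcal A'_{l,t}=\mathcal A$ if $l<k$. Let $\mathcal S_\dagger\subset\mathbb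 R^D$ be a finite nonempty anchor set. Anchor recursion (for $s\in\mathcal S_\dagger$): $\hat V_\tau(s,l,T-1)=\max_{a\in\mathcal A}R(s,a)$ for $l<k$ and $\hat V_\tau(s,k,T-1)=R(s,a_{T-1})$; for $t=T-2,\dots,0$, $\hat V_\tau(s,l,t)=\max_{a\in\mathcal A'_{l,t}}\{R(s,a)+\min_{s_\dagger\in\mathcal S_\dagger}\{\hat V_\tau(s_\dagger,l_a,t+1)+L_{t+1}\|s_\dagger-s_a\|\}\}$ with $(s_a,l_a)=F^+_{\tau,t}((s,l),a)$. Extended heuristic (for all $s\in\mathbb R^D$): $\hat V_\tau(s,l,T)=0$; $\hat V_\tau(s,l,T-1)=\max_{a\in\mathcal A'_{l,T-1}}R(s,a)$; and for $t\le T-2$, $\hat V_\tau(s,l,t)=\max_{a\in\mathcal A'_{l,t}}\{R(s,a)+\min_{s_\dagger\in\mathcal S_\dagger}\{\hat V_\tau(s_\dagger,l_a,t+1)+L_{t+1}\|s_\dagger-s_a\|\}\}$, where the values $\hat V_\tau(s_\dagger,\cdot,t+1)$ at anchors are those of the anchor recursion (which coincide with the extended formula on anchors). *)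

theory Defs
  imports "HOL-Analysis.Analysis"
begin

text \<open>States live in R^D, rendered as real^'d. Actions form a finite set A of type 'a,
  noise values have type 'u.\<close>

definition Aprime :: "'a set \<Rightarrow> (nat \<Rightarrow> 'a) \<Rightarrow> nat \<Rightarrow> nat \<Rightarrow> nat \<Rightarrow> 'a set" where
  "Aprime A acts k l t = (if l = k then {acts t} else A)"

text \<open>Counterfactual transition F^+_{tau,t}: state component and counter component.\<close>
definition Fstate :: "('s \<Rightarrow> 'a \<Rightarrow> 'u \<Rightarrow> 's) \<Rightarrow> (nat \<Rightarrow> 'u) \<Rightarrow> nat \<Rightarrow> 's \<Rightarrow> 'a \<Rightarrow> 's" where
  "Fstate g u t s a = g s a (u t)"

definition Fcount :: "(nat \<Rightarrow> 'a) \<Rightarrow> nat \<Rightarrow> nat \<Rightarrow> 'a \<Rightarrow> nat" where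
  "Fcount acts t l a = l + (if a \<noteq> acts t then 1 else 0)"

definition Cmax :: "'a set \<Rightarrow> ('a \<Rightarrow> real) \<Rightarrow> real" where
  "Cmax A Cl = Max (Cl ` A)"

definition Kmax :: "'a set \<Rightarrow> ('a \<Rightarrow> 'u \<Rightarrow> real) \<Rightarrow> (nat \<Rightarrow> 'u) \<Rightarrow> nat \<Rightarrow> real" where
  "Kmax A K u t = Max ((\<lambda>a. K a (u t)) ` A)"

function Lconst :: "'a set \<Rightarrow> ('a \<Rightarrow> real) \<Rightarrow> ('a \<Rightarrow> 'u \<Rightarrow> real) \<Rightarrow> (nat \<Rightarrow> 'u) \<Rightarrow> nat \<Rightarrow> nat \<Rightarrow> real" where
  "Lconst A Cl K u T t =
     (if T - 1 \<le> t then Cmax A Cl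
      else Cmax A Cl + Lconst A Cl K u T (Suc t) * Kmax A K u t)"
  by pat_completeness auto
termination
  by (relation "Wellfounded.measure (\<lambda>(A, Cl, K, u, T, t). T - t)") auto

text \<open>Extended heuristic hat V_tau(s,l,t) on all states, for t <= T
  (values for t > T are irrelevant and set to 0, as at t = T).\<close>
function Vhat :: "'a set \<Rightarrow> ('s::real_normed_vector \<Rightarrow> 'a \<Rightarrow> real) \<Rightarrow> ('s \<Rightarrow> 'a \<Rightarrow> 'u \<Rightarrow> 's)
    \<Rightarrow> (nat \<Rightarrow> 'u) \<Rightarrow> (nat \<Rightarrow> 'a) \<Rightarrow> nat \<Rightarrow> nat \<Rightarrow> 's set \<Rightarrow> (nat \<Rightarrow> real)
    \<Rightarrow> 's \<Rightarrow> nat \<Rightarrow> nat \<Rightarrow> real" where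
  "Vhat A R g u acts k T Sd L s l t =
     (if T \<le> t then 0
      else if t = T - 1 then Max ((\<lambda>a. R s a) ` Aprime A acts k l t)
      else Max ((\<lambda>a. R s a +
                 Min ((\<lambda>sd. Vhat A R g u acts k T Sd L sd (Fcount acts t l a) (Suc t)
                             + L (Suc t) * norm (sd - Fstate g u t s a)) ` Sd))
               ` Aprime A acts k l t))"
  by pat_completeness auto
termination
  by (relation "Wellfounded.measure (\<lambda>(A, R, g, u, acts, k, T, Sd, L, s, l, t). T - t)") auto

end

theory Submission
  imports Defs
begin

text \<open>If V(-,l,t) is L_t-Lipschitz, then V(x,l,t) <= V(s',l,t) + L_t ||s' - x|| for every anchor s',
  so V(x,l,t) is dominated by the anchor minimum that the recursion uses one step earlier, and
  consistency follows by taking the maximum over actions. The Lipschitz property needs no induction: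
  a minimum of cones of slope L_t is L_t-Lipschitz whatever the anchor values are, and composing with
  the K-Lipschitz transition and adding the C-Lipschitz reward gives L_t = C + L_(t+1) K.\<close>

declare Vhat.simps [simp del] Lconst.simps [simp del]

lemma Max_image_le_plus:
  fixes f g :: "'i \<Rightarrow> real"
  assumes "finite I" "I \<noteq> {}" "\<And>i. i \<in> I \<Longrightarrow> f i \<le> g i + c"
  shows "Max (f ` I) \<le> Max (g ` I) + c"
proof (rule Max.boundedI)
  fix y assume "y \<in> f ` I"
  then obtain i where "i \<in> I" "y = f i" by blast
  moreover have "g i \<le> Max (g ` I)" using \<open>i \<in> I\<close> assms(1) by simp
  ultimately show "y \<le> Max (g ` I) + c" using assms(3) by fastforce
qed (use assms in auto)

lemma Min_image_le_plus:
  fixes f g :: "'i \<Rightarrow> real"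
  assumes "finite I" "I \<noteq> {}" "\<And>i. i \<in> I \<Longrightarrow> f i \<le> g i + c"
  shows "Min (f ` I) \<le> Min (g ` I) + c"
proof -
  have "Min (g ` I) \<in> g ` I" using assms(1,2) by simp
  then obtain i where "i \<in> I" "Min (g ` I) = g i" by blast
  moreover have "Min (f ` I) \<le> f i" using \<open>i \<in> I\<close> assms(1) by simp
  ultimately show ?thesis using assms(3) by fastforce
qed

lemma lipschitz_on_real_le:
  fixes f :: "'a::metric_space \<Rightarrow> real"
  assumes "C-lipschitz_on U f" "x \<in> U" "y \<in> U"
  shows "f x \<le> f y + C * dist x y"
  using lipschitz_onD[OF assms] by (simp add: dist_real_def)

lemma lipschitz_on_Max_image:
  fixes f :: "'i \<Rightarrow> 'a::metric_space \<Rightarrow> real"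
  assumes I: "finite I" "I \<noteq> {}" and f: "\<And>i. i \<in> I \<Longrightarrow> C-lipschitz_on U (f i)"
  shows "C-lipschitz_on U (\<lambda>x. Max ((\<lambda>i. f i x) ` I))"
proof (rule lipschitz_onI)
  fix x y assume "x \<in> U" "y \<in> U"
  then have "f i x \<le> f i y + C * dist x y" "f i y \<le> f i x + C * dist x y" if "i \<in> I" for i
    using f[OF that] \<open>x \<in> U\<close> \<open>y \<in> U\<close> by (metis lipschitz_on_real_le dist_commute)+
  then have "Max ((\<lambda>i. f i x) ` I) \<le> Max ((\<lambda>i. f i y) ` I) + C * dist x y"
    and "Max ((\<lambda>i. f i y) ` I) \<le> Max ((\<lambda>i. f i x) ` I) + C * dist x y"
    using I by (blast intro: Max_image_le_plus)+
  then show "dist (Max ((\<lambda>i. f i x) ` I)) (Max ((\<lambda>i. f i y) ` I)) \<le> C * dist x y"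
    by (simp add: dist_real_def)
next
  show "0 \<le> C" using I f lipschitz_on_nonneg by blast
qed

lemma lipschitz_on_Min_image:
  fixes f :: "'i \<Rightarrow> 'a::metric_space \<Rightarrow> real"
  assumes I: "finite I" "I \<noteq> {}" and f: "\<And>i. i \<in> I \<Longrightarrow> C-lipschitz_on U (f i)"
  shows "C-lipschitz_on U (\<lambda>x. Min ((\<lambda>i. f i x) ` I))"
proof (rule lipschitz_onI)
  fix x y assume "x \<in> U" "y \<in> U"
  then have "f i x \<le> f i y + C * dist x y" "f i y \<le> f i x + C * dist x y" if "i \<in> I" for i
    using f[OF that] \<open>x \<in> U\<close> \<open>y \<in> U\<close> by (metis lipschitz_on_real_le dist_commute)+
  then have "Min ((\<lambda>i. f i x) ` I) \<le> Min ((\<lambda>i. f i y) ` I) + C * dist x y"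
    and "Min ((\<lambda>i. f i y) ` I) \<le> Min ((\<lambda>i. f i x) ` I) + C * dist x y"
    using I by (blast intro: Min_image_le_plus)+
  then show "dist (Min ((\<lambda>i. f i x) ` I)) (Min ((\<lambda>i. f i y) ` I)) \<le> C * dist x y"
    by (simp add: dist_real_def)
next
  show "0 \<le> C" using I f lipschitz_on_nonneg by blast
qed

lemma lipschitz_on_norm_diff: "1-lipschitz_on U (\<lambda>x. norm (y - x))"
proof (rule lipschitz_onI)
  fix x x' :: 'a
  have "\<bar>norm (y - x) - norm (y - x')\<bar> \<le> norm ((y - x) - (y - x'))"
    by (rule norm_triangle_ineq3)
  then show "dist (norm (y - x)) (norm (y - x')) \<le> 1 * dist x x'"
    by (simp add: dist_real_def dist_norm norm_minus_commute)
qed simp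

locale lipschitz_counterfactual_model =
  fixes A :: "'a set"
    and R :: "'s::real_normed_vector \<Rightarrow> 'a \<Rightarrow> real"
    and g :: "'s \<Rightarrow> 'a \<Rightarrow> 'u \<Rightarrow> 's"
    and K :: "'a \<Rightarrow> 'u \<Rightarrow> real"
    and Cl :: "'a \<Rightarrow> real"
    and u :: "nat \<Rightarrow> 'u"
    and acts :: "nat \<Rightarrow> 'a"
    and k T :: nat
    and Sd :: "'s set"
  assumes finite_A: "finite A" and A_nonempty: "A \<noteq> {}"
    and R_lipschitz: "\<And>a. a \<in> A \<Longrightarrow> (Cl a)-lipschitz_on UNIV (\<lambda>s. R s a)"
    and g_lipschitz: "\<And>a v. a \<in> A \<Longrightarrow> (K a v)-lipschitz_on UNIV (\<lambda>s. g s a v)"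
    and acts_in_A: "\<And>t. t < T \<Longrightarrow> acts t \<in> A"
    and finite_Sd: "finite Sd" and Sd_nonempty: "Sd \<noteq> {}"
begin

abbreviation L :: "nat \<Rightarrow> real" where
  "L \<equiv> Lconst A Cl K u T"

abbreviation V :: "'s \<Rightarrow> nat \<Rightarrow> nat \<Rightarrow> real" where
  "V \<equiv> Vhat A R g u acts k T Sd L"

definition anchor_bound :: "nat \<Rightarrow> nat \<Rightarrow> 's \<Rightarrow> real" where
  "anchor_bound l t x = Min ((\<lambda>sd. V sd l t + L t * norm (sd - x)) ` Sd)"

lemma Cl_le_Cmax: "a \<in> A \<Longrightarrow> Cl a \<le> Cmax A Cl"
  using finite_A by (simp add: Cmax_def)

lemma K_le_Kmax: "a \<in> A \<Longrightarrow> K a (u t) \<le> Kmax A K u t"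
  using finite_A by (simp add: Kmax_def)

lemma Lconst_nonneg: "0 \<le> L t"
proof (induction "T - t" arbitrary: t rule: less_induct)
  case less
  obtain a where a: "a \<in> A" using A_nonempty by blast
  have "0 \<le> Cmax A Cl" "0 \<le> Kmax A K u t"
    using Cl_le_Cmax[OF a] K_le_Kmax[OF a] lipschitz_on_nonneg[OF R_lipschitz[OF a]]
      lipschitz_on_nonneg[OF g_lipschitz[OF a]] by (blast intro: order_trans)+
  moreover have "t < T - 1 \<Longrightarrow> 0 \<le> L (Suc t)" using less by simp
  ultimately show ?case by (subst Lconst.simps) simp
qed

lemma Lconst_last: "Suc t = T \<Longrightarrow> L t = Cmax A Cl"
  by (subst Lconst.simps) auto

lemma Lconst_step: "Suc t < T \<Longrightarrow> L t = Cmax A Cl + L (Suc t) * Kmax A K u t"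
  by (subst Lconst.simps) auto

lemma Vhat_terminal: "T \<le> t \<Longrightarrow> V s l t = 0"
  by (subst Vhat.simps) auto

lemma Vhat_last: "Suc t = T \<Longrightarrow> V s l t = Max ((\<lambda>a. R s a) ` Aprime A acts k l t)"
  by (subst Vhat.simps) auto

lemma Vhat_step:
  "Suc t < T \<Longrightarrow>
   V s l t = Max ((\<lambda>a. R s a + anchor_bound (Fcount acts t l a) (Suc t) (Fstate g u t s a))
                   ` Aprime A acts k l t)"
  unfolding anchor_bound_def by (subst Vhat.simps) auto

lemma Aprime_subset: "t < T \<Longrightarrow> Aprime A acts k l t \<subseteq> A"
  using acts_in_A by (simp add: Aprime_def)

lemma finite_Aprime: "t < T \<Longrightarrow> finite (Aprime A acts k l t)"
  using Aprime_subset finite_A finite_subset by blast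

lemma Aprime_nonempty: "Aprime A acts k l t \<noteq> {}"
  using A_nonempty by (simp add: Aprime_def)

lemma lipschitz_anchor_bound: "(L t)-lipschitz_on UNIV (anchor_bound l t)"
  unfolding anchor_bound_def[abs_def]
proof (rule lipschitz_on_Min_image[OF finite_Sd Sd_nonempty])
  fix sd
  have "(0 + L t * 1)-lipschitz_on UNIV (\<lambda>x. V sd l t + L t * norm (sd - x))"
    by (intro lipschitz_on_add lipschitz_on_constant lipschitz_on_cmult_real_nonneg
        lipschitz_on_norm_diff Lconst_nonneg)
  then show "(L t)-lipschitz_on UNIV (\<lambda>x. V sd l t + L t * norm (sd - x))"
    by simp
qed

lemma lipschitz_action_value:
  assumes "t < T" "a \<in> Aprime A acts k l t"
  shows "(Cmax A Cl + L (Suc t) * Kmax A K u t)-lipschitz_on UNIV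
           (\<lambda>s. R s a + anchor_bound (Fcount acts t l a) (Suc t) (Fstate g u t s a))"
proof -
  have a: "a \<in> A" using assms Aprime_subset by blast
  have "(Cl a + L (Suc t) * K a (u t))-lipschitz_on UNIV
          (\<lambda>s. R s a + anchor_bound (Fcount acts t l a) (Suc t) (g s a (u t)))"
    by (intro lipschitz_on_add R_lipschitz[OF a] lipschitz_on_compose2 g_lipschitz[OF a]
        lipschitz_on_subset[OF lipschitz_anchor_bound]) simp
  moreover have "Cl a + L (Suc t) * K a (u t) \<le> Cmax A Cl + L (Suc t) * Kmax A K u t"
    using Cl_le_Cmax[OF a] K_le_Kmax[OF a] Lconst_nonneg
    by (intro add_mono mult_left_mono)
  ultimately show ?thesis by (simp add: Fstate_def lipschitz_on_le)
qed

lemma lipschitz_Vhat: "(L t)-lipschitz_on UNIV (\<lambda>s. V s l t)"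
proof -
  consider "T \<le> t" | "Suc t = T" | "Suc t < T" by linarith
  then show ?thesis
  proof cases
    case 1
    then show ?thesis
      using lipschitz_on_le[OF lipschitz_on_constant[of UNIV 0] Lconst_nonneg]
      by (simp add: Vhat_terminal)
  next
    case 2
    have "(Cmax A Cl)-lipschitz_on UNIV (\<lambda>s. Max ((\<lambda>a. R s a) ` Aprime A acts k l t))"
    proof (intro lipschitz_on_Max_image finite_Aprime Aprime_nonempty)
      fix a assume "a \<in> Aprime A acts k l t"
      then have "a \<in> A" using 2 Aprime_subset[of t] by auto
      then show "(Cmax A Cl)-lipschitz_on UNIV (\<lambda>s. R s a)"
        using R_lipschitz Cl_le_Cmax lipschitz_on_le by blast
    qed (use 2 in simp)
    then show ?thesis using 2 by (simp add: Vhat_last Lconst_last)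
  next
    case 3
    have "(Cmax A Cl + L (Suc t) * Kmax A K u t)-lipschitz_on UNIV (\<lambda>s. V s l t)"
      using 3 by (simp add: Vhat_step lipschitz_on_Max_image finite_Aprime Aprime_nonempty
          lipschitz_action_value)
    then show ?thesis using 3 by (simp add: Lconst_step)
  qed
qed

lemma Vhat_le_anchor_bound: "V x l t \<le> anchor_bound l t x"
proof -
  have "V x l t \<le> V sd l t + L t * norm (sd - x)" for sd
    using lipschitz_on_real_le[OF lipschitz_Vhat, of x sd] by (simp add: dist_commute dist_norm)
  then show ?thesis
    unfolding anchor_bound_def using finite_Sd Sd_nonempty by simp
qed

lemma Vhat_consistent_step:
  assumes "Suc t < T" "a \<in> Aprime A acts k l t"
  shows "R s a + V (Fstate g u t s a) (Fcount acts t l a) (Suc t) \<le> V s l t"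
proof -
  have "R s a + V (Fstate g u t s a) (Fcount acts t l a) (Suc t)
          \<le> R s a + anchor_bound (Fcount acts t l a) (Suc t) (Fstate g u t s a)"
    by (simp add: Vhat_le_anchor_bound)
  also have "\<dots> \<le> V s l t"
    unfolding Vhat_step[OF assms(1)] using assms finite_Aprime by (intro Max_ge) auto
  finally show ?thesis .
qed

lemma Vhat_consistent_last:
  assumes "Suc t = T" "a \<in> Aprime A acts k l t"
  shows "R s a \<le> V s l t"
  unfolding Vhat_last[OF assms(1)] using assms finite_Aprime by (intro Max_ge) auto

end

theorem theorem2:
  fixes A :: "'a set"
    and g :: "real^'d \<Rightarrow> 'a \<Rightarrow> 'u \<Rightarrow> real^'d"
    and ginv :: "real^'d \<Rightarrow> 'a \<Rightarrow> real^'d \<Rightarrow> 'u"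
    and R :: "real^'d \<Rightarrow> 'a \<Rightarrow> real"
    and K :: "'a \<Rightarrow> 'u \<Rightarrow> real"
    and Cl :: "'a \<Rightarrow> real"
    and T k :: nat
    and st :: "nat \<Rightarrow> real^'d"
    and acts :: "nat \<Rightarrow> 'a"
    and Sd :: "(real^'d) set"
    and u :: "nat \<Rightarrow> 'u"
    and L :: "nat \<Rightarrow> real"
    and V :: "real^'d \<Rightarrow> nat \<Rightarrow> nat \<Rightarrow> real"
  assumes finA: "finite A"
    and T2: "T \<ge> 2"
    and g_bij: "\<And>s a. a \<in> A \<Longrightarrow> bij (g s a)"
    and g_inv: "\<And>s a u s'. a \<in> A \<Longrightarrow> s' = g s a u \<Longrightarrow> ginv s a s' = u"
    and K_nonneg: "\<And>a u. a \<in> A \<Longrightarrow> K a u \<ge> 0"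
    and g_lip: "\<And>a u s s'. a \<in> A \<Longrightarrow> norm (g s a u - g s' a u) \<le> K a u * norm (s - s')"
    and C_nonneg: "\<And>a. a \<in> A \<Longrightarrow> Cl a \<ge> 0"
    and R_lip: "\<And>a s s'. a \<in> A \<Longrightarrow> \<bar>R s a - R s' a\<bar> \<le> Cl a * norm (s - s')"
    and acts_in: "\<And>t. t < T \<Longrightarrow> acts t \<in> A"
    and k_le: "k \<le> T"
    and Sd_fin: "finite Sd" and Sd_ne: "Sd \<noteq> {}"
    and u_def: "u = (\<lambda>t. ginv (st t) (acts t) (st (Suc t)))"
    and L_def: "L = Lconst A Cl K u T"
    and V_def: "V = Vhat A R g u acts k T Sd L"
  shows "(\<forall>t l s a. t \<le> T - 2 \<longrightarrow> l \<le> k \<longrightarrow> a \<in> Aprime A acts k l t \<longrightarrow>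
            V s l t \<ge> R s a + V (Fstate g u t s a) (Fcount acts t l a) (Suc t))
       \<and> (\<forall>l s a. l \<le> k \<longrightarrow> a \<in> Aprime A acts k l (T - 1) \<longrightarrow>
            (\<forall>s'. V s l (T - 1) \<ge> R s a + V s' k T \<and> R s a + V s' k T = R s a))"
proof -
  interpret M: lipschitz_counterfactual_model A R g K Cl u acts k T Sd
  proof
    show "A \<noteq> {}" using acts_in[of 0] T2 by auto
    show "(Cl a)-lipschitz_on UNIV (\<lambda>s. R s a)" if "a \<in> A" for a
      using R_lip[OF that] C_nonneg[OF that]
      by (intro lipschitz_onI) (simp_all add: dist_real_def dist_norm)
    show "(K a v)-lipschitz_on UNIV (\<lambda>s. g s a v)" if "a \<in> A" for a v
      using g_lip[OF that] K_nonneg[OF that] by (intro lipschitz_onI) (simp_all add: dist_norm)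
  qed (use finA acts_in Sd_fin Sd_ne in auto)
  have "R s a + V (Fstate g u t s a) (Fcount acts t l a) (Suc t) \<le> V s l t"
    if "t \<le> T - 2" "a \<in> Aprime A acts k l t" for t l s a
    using that T2 unfolding V_def L_def by (intro M.Vhat_consistent_step) auto
  moreover have "R s a \<le> V s l (T - 1)" and "V s' k T = 0"
    if "a \<in> Aprime A acts k l (T - 1)" for l s s' a
    using that T2 unfolding V_def L_def
    by (auto intro: M.Vhat_consistent_last simp: M.Vhat_terminal)
  ultimately show ?thesis by auto
qed

end
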